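(* Consider the two-bidder bidding game (defined in the context) in which both bidders have made the same ex-ante latency investment, so that $t_1=t_2$. Then this bidding game has a completely separating Bayesian Nash equilibrium, i.e. one in which each bidder's bid is a strictly increasing function of its valuation.
   Context: Fix a parameter $g>0$ and the boost function $\pi(b)=\frac{gb}{b+1}$ for $b\ge0$. Two bidders $i\in\{1,2\}$ have fixed latencies (timestamps) $t_1,t_2$ that are commonly known. Each bidder privately learns its valuation $v_i$, with $v_1,v_2$ independent and uniformly distributed on $[0,1]$, and then chooses a bid $b_i\ge0$. The bidder's score is $\pi(b_i)-t_i$; the bidder with the higher score has its transaction ordered first and receives its valuation. Bids are paid regardless of the outcome (all-pay), so bidder $i$'s payoff is $v_i\cdot\mathbf{1}[\text{$i$ has the higher score}]-b_i$. *)

theory Defs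
  imports "HOL-Analysis.Analysis"
begin

definition boost :: "real \<Rightarrow> real \<Rightarrow> real" where
  "boost g b = g * b / (b + 1)"

text \<open>Probability (valuation of the opponent j uniform on [0,1], opponent bidding
  according to strategy beta_j) that bidder i with latency t_i and bid b has
  strictly the higher score.\<close>
definition win_prob :: "real \<Rightarrow> real \<Rightarrow> real \<Rightarrow> (real \<Rightarrow> real) \<Rightarrow> real \<Rightarrow> real" where
  "win_prob g ti tj betaj b =
     measure lborel {w \<in> {0..1}. boost g b - ti > boost g (betaj w) - tj}"

definition exp_payoff :: "real \<Rightarrow> real \<Rightarrow> real \<Rightarrow> (real \<Rightarrow> real) \<Rightarrow> real \<Rightarrow> real \<Rightarrow> real" where
  "exp_payoff g ti tj betaj v b = v * win_prob g ti tj betaj b - b"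

definition is_BNE :: "real \<Rightarrow> real \<Rightarrow> real \<Rightarrow> (real \<Rightarrow> real) \<Rightarrow> (real \<Rightarrow> real) \<Rightarrow> bool" where
  "is_BNE g t1 t2 beta1 beta2 \<longleftrightarrow>
     (\<forall>v\<in>{0..1}. beta1 v \<ge> 0 \<and> beta2 v \<ge> 0) \<and>
     (\<forall>v\<in>{0..1}. \<forall>b\<ge>0. exp_payoff g t1 t2 beta2 v b \<le> exp_payoff g t1 t2 beta2 v (beta1 v)) \<and>
     (\<forall>v\<in>{0..1}. \<forall>b\<ge>0. exp_payoff g t2 t1 beta1 v b \<le> exp_payoff g t2 t1 beta1 v (beta2 v))"

end

theory Submission
  imports Defs
begin

text \<open>With equal latencies the boost is strictly increasing, so the bidder with the higher bid
  wins regardless of g, and the game reduces to the symmetric two-bidder all-pay auction with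
  uniform valuations. There the bid v^2/2 is an equilibrium: against it, a bid b = s^2/2 wins
  with probability min 1 s, so its payoff v min 1 s - s^2/2 is at most v s - s^2/2, which is
  maximal at s = v.\<close>

lemma boost_less_iff:
  assumes "g > 0" "b > -1" "c > -1"
  shows "boost g c < boost g b \<longleftrightarrow> c < b"
proof -
  have "boost g c < boost g b \<longleftrightarrow> g * c * (b + 1) < g * b * (c + 1)"
    using assms by (simp add: boost_def divide_simps)
  also have "\<dots> \<longleftrightarrow> g * c < g * b" by (simp add: algebra_simps)
  also have "\<dots> \<longleftrightarrow> c < b" using assms by simp
  finally show ?thesis .
qed

lemma win_prob_equal_latencies:
  assumes "g > 0" "b \<ge> 0" "\<forall>w\<in>{0..1}. beta w \<ge> 0"
  shows "win_prob g t t beta b = measure lborel {w \<in> {0..1}. beta w < b}"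
proof -
  have "{w \<in> {0..1}. boost g b - t > boost g (beta w) - t} = {w \<in> {0..1}. beta w < b}"
  proof -
    have "boost g (beta w) < boost g b \<longleftrightarrow> beta w < b" if "w \<in> {0..1}" for w
      using assms(1,2) assms(3)[rule_format, OF that] by (intro boost_less_iff) auto
    then show ?thesis by auto
  qed
  then show ?thesis by (simp add: win_prob_def)
qed

lemma measure_square_less:
  assumes "c \<ge> 0"
  shows "measure lborel {w \<in> {0..1::real}. w\<^sup>2 < c} = min 1 (sqrt c)"
proof -
  have sq_less: "w\<^sup>2 < c \<longleftrightarrow> w < sqrt c" if "w \<ge> 0" for w
    using that real_sqrt_less_iff[of "w\<^sup>2" c] by simp
  show ?thesis
  proof (cases "c \<le> 1")
    case True
    then have "sqrt c \<le> 1" by simp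
    then have "{w \<in> {0..1::real}. w\<^sup>2 < c} = {0..<sqrt c}"
      using sq_less by (auto simp del: real_sqrt_le_1_iff)
    then show ?thesis using assms \<open>sqrt c \<le> 1\<close> by simp
  next
    case False
    then have "sqrt c > 1" by simp
    then have "{w \<in> {0..1::real}. w\<^sup>2 < c} = {0..1}"
      using sq_less by (auto simp del: real_sqrt_gt_1_iff)
    then show ?thesis using \<open>sqrt c > 1\<close> by simp
  qed
qed

lemma uniform_all_pay_payoff_le:
  fixes v b :: real
  assumes "0 \<le> v" "b \<ge> 0"
  shows "v * min 1 (sqrt (2 * b)) - b \<le> v\<^sup>2 / 2"
proof -
  define s where "s = sqrt (2 * b)"
  have b_eq: "b = s\<^sup>2 / 2" using assms by (simp add: s_def)
  have "v * min 1 s \<le> v * s"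
    using assms by (intro mult_left_mono) auto
  then have "v * min 1 s - b \<le> v * s - s\<^sup>2 / 2"
    using b_eq by simp
  also have "\<dots> \<le> v\<^sup>2 / 2"
    using zero_le_power2[of "v - s"] by (simp add: power2_eq_square algebra_simps)
  finally show ?thesis by (simp add: s_def)
qed

lemma quadratic_bid_best_response:
  assumes "g > 0" "v \<in> {0..1}" "b \<ge> 0"
  defines "beta \<equiv> \<lambda>w::real. w\<^sup>2 / 2"
  shows "exp_payoff g t t beta v b \<le> exp_payoff g t t beta v (beta v)"
proof -
  have win: "win_prob g t t beta c = min 1 (sqrt (2 * c))" if "c \<ge> 0" for c
  proof -
    have "{w \<in> {0..1}. beta w < c} = {w \<in> {0..1::real}. w\<^sup>2 < 2 * c}"
      by (auto simp: beta_def)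
    then show ?thesis
      using win_prob_equal_latencies[OF assms(1) that, of beta t] measure_square_less[of "2 * c"] that
      by (simp add: beta_def)
  qed
  have "sqrt (2 * beta v) = v" using assms(2) by (simp add: beta_def)
  then have "exp_payoff g t t beta v (beta v) = v\<^sup>2 / 2"
    using assms(2) win[of "beta v"] by (simp add: exp_payoff_def beta_def power2_eq_square)
  then show ?thesis
    using uniform_all_pay_payoff_le[of v b] assms(2,3) win[OF assms(3)] by (simp add: exp_payoff_def)
qed

theorem proposition4:
  fixes g t1 t2 :: real
  assumes "g > 0" and "t1 = t2"
  shows "\<exists>beta1 beta2. strict_mono_on {0..1} beta1 \<and> strict_mono_on {0..1} beta2 \<and>
           is_BNE g t1 t2 beta1 beta2"
proof -
  let ?beta = "\<lambda>v::real. v\<^sup>2 / 2"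
  have "strict_mono_on {0..1} ?beta"
    by (auto simp: strict_mono_on_def power_strict_mono)
  moreover have "is_BNE g t1 t1 ?beta ?beta"
    using quadratic_bid_best_response[OF assms(1)] by (simp add: is_BNE_def)
  ultimately show ?thesis using assms(2) by blast
qed

end
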